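(* 1. $\mathrm{DCFL}\cap\mathrm{1RFA}/Rn\nsubseteq\mathrm{REG}/n$. 2. $\mathrm{1RFA}/Rn\nsubseteq\mathrm{CFL}/n$.
   Context: $\mathrm{DCFL}$ is the family of deterministic context-free languages. For equal-length strings $x,y$, $\genfrac{[}{]}{0pt}{}{x}{y}$ is the two-track string with $x$ on the upper track and $y$ on the lower track. $\mathrm{REG}/n$ (resp. $\mathrm{CFL}/n$) is the family of languages $L$ for which there exist a one-way deterministic finite automaton (resp. one-way nondeterministic pushdown automaton) $M$, an advice alphabet $\Gamma$ and an advice function $h:\mathbb{N}\to\Gamma^*$ with $|h(n)|=n$ such that $x\in L$ iff $M$ accepts $\genfrac{[}{]}{0pt}{}{x}{h(|x|)}$. A 1rfa is a one-way deterministic finite automaton satisfying the reversibility condition (for every state $q$ and tape symbol $\sigma$ at most one $q'$ with $\delta(q',\sigma)=q$). $\mathrm{1RFA}/Rn$ is the family of languages $L$ for which there exist a 1rfa $M$, an error bound $\varepsilon\in[0,1/2)$, an advice alphabet $\Gamma$ and randomized advice, i.e. a probability ensemble $\{D_n\}_{n\in\mathbb{N}}$ with $D_n$ a distribution on $\Gamma^n$, such that for every $n$ and $x\in\Sigma^n$, $M$ on $\genfrac{[}{]}{0pt}{}{x}{y}$ outputs $L(x)$ with probability at least $1-\varepsilon$ when $y$ is drawn according to $D_n$. *)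

theory Defs
  imports "HOL-Probability.Probability_Mass_Function"
begin

text \<open>Languages are sets of words over a finite alphabet \<open>\<Sigma> :: nat set\<close>
  (every finite alphabet can be coded into nat).  Two-track strings over \<open>\<Sigma> \<times> \<Gamma>\<close> are
  represented by \<open>zip x y\<close> for equal-length \<open>x, y\<close>.\<close>

record 'i dfa =
  d_states :: "nat set"
  d_init   :: nat
  d_delta  :: "nat \<Rightarrow> 'i \<Rightarrow> nat"
  d_final  :: "nat set"

definition dfa :: "'i set \<Rightarrow> 'i dfa \<Rightarrow> bool" where
  "dfa A M \<longleftrightarrow> finite (d_states M) \<and> d_init M \<in> d_states M \<and> d_final M \<subseteq> d_states M \<and>
     (\<forall>q\<in>d_states M. \<forall>a\<in>A. d_delta M q a \<in> d_states M)"

definition dfa_accepts :: "'i dfa \<Rightarrow> 'i list \<Rightarrow> bool" where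
  "dfa_accepts M w \<longleftrightarrow> foldl (d_delta M) (d_init M) w \<in> d_final M"

definition rfa :: "'i set \<Rightarrow> 'i dfa \<Rightarrow> bool" where
  "rfa A M \<longleftrightarrow> dfa A M \<and>
     (\<forall>q\<in>d_states M. \<forall>a\<in>A. \<forall>q1\<in>d_states M. \<forall>q2\<in>d_states M.
        d_delta M q1 a = q \<and> d_delta M q2 a = q \<longrightarrow> q1 = q2)"

record 'i pda =
  p_states :: "nat set"
  p_stack  :: "nat set"
  p_init   :: nat
  p_bottom :: nat
  p_final  :: "nat set"
  p_trans  :: "(nat \<times> 'i option \<times> nat \<times> nat \<times> nat list) set"

definition pda :: "'i set \<Rightarrow> 'i pda \<Rightarrow> bool" where
  "pda A M \<longleftrightarrow> finite (p_states M) \<and> finite (p_stack M) \<and>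
     p_init M \<in> p_states M \<and> p_bottom M \<in> p_stack M \<and> p_final M \<subseteq> p_states M \<and>
     finite (p_trans M) \<and>
     (\<forall>(q, a, Z, p, \<alpha>) \<in> p_trans M. q \<in> p_states M \<and> p \<in> p_states M \<and>
        Z \<in> p_stack M \<and> set \<alpha> \<subseteq> p_stack M \<and> (\<forall>b. a = Some b \<longrightarrow> b \<in> A))"

text \<open>Configurations: (state, remaining input, stack with top first).\<close>
definition pda_step :: "'i pda \<Rightarrow> nat \<times> 'i list \<times> nat list \<Rightarrow> nat \<times> 'i list \<times> nat list \<Rightarrow> bool" where
  "pda_step M c c' \<longleftrightarrow> (case c of (q, w, s) \<Rightarrow> case c' of (p, w', s') \<Rightarrow>
     (\<exists>Z \<gamma> \<alpha>. s = Z # \<gamma> \<and> s' = \<alpha> @ \<gamma> \<and>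
        ((\<exists>a. w = a # w' \<and> (q, Some a, Z, p, \<alpha>) \<in> p_trans M) \<or>
         (w' = w \<and> (q, None, Z, p, \<alpha>) \<in> p_trans M))))"

definition pda_accepts :: "'i pda \<Rightarrow> 'i list \<Rightarrow> bool" where
  "pda_accepts M w \<longleftrightarrow> (\<exists>p \<gamma>. p \<in> p_final M \<and>
      (pda_step M)\<^sup>*\<^sup>* (p_init M, w, [p_bottom M]) (p, [], \<gamma>))"

definition dpda :: "'i set \<Rightarrow> 'i pda \<Rightarrow> bool" where
  "dpda A M \<longleftrightarrow> pda A M \<and>
     (\<forall>q a Z p \<alpha> p' \<alpha>'. (q, a, Z, p, \<alpha>) \<in> p_trans M \<and> (q, a, Z, p', \<alpha>') \<in> p_trans M
         \<longrightarrow> p = p' \<and> \<alpha> = \<alpha>') \<and>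
     (\<forall>q Z p \<alpha> b p' \<alpha>'. (q, None, Z, p, \<alpha>) \<in> p_trans M \<longrightarrow> (q, Some b, Z, p', \<alpha>') \<notin> p_trans M)"

definition DCFL :: "nat set \<Rightarrow> nat list set set" where
  "DCFL \<Sigma> = {L. L \<subseteq> lists \<Sigma> \<and> (\<exists>M :: nat pda. dpda \<Sigma> M \<and> L = {w \<in> lists \<Sigma>. pda_accepts M w})}"

definition advice_fun :: "nat set \<Rightarrow> (nat \<Rightarrow> nat list) \<Rightarrow> bool" where
  "advice_fun \<Gamma> h \<longleftrightarrow> (\<forall>n. length (h n) = n \<and> set (h n) \<subseteq> \<Gamma>)"

definition REG_n :: "nat set \<Rightarrow> nat list set set" where
  "REG_n \<Sigma> = {L. L \<subseteq> lists \<Sigma> \<and> (\<exists>(M :: (nat \<times> nat) dfa) \<Gamma> h. finite \<Gamma> \<and> dfa (\<Sigma> \<times> \<Gamma>) M \<and>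
      advice_fun \<Gamma> h \<and> (\<forall>x \<in> lists \<Sigma>. x \<in> L \<longleftrightarrow> dfa_accepts M (zip x (h (length x)))))}"

definition CFL_n :: "nat set \<Rightarrow> nat list set set" where
  "CFL_n \<Sigma> = {L. L \<subseteq> lists \<Sigma> \<and> (\<exists>(M :: (nat \<times> nat) pda) \<Gamma> h. finite \<Gamma> \<and> pda (\<Sigma> \<times> \<Gamma>) M \<and>
      advice_fun \<Gamma> h \<and> (\<forall>x \<in> lists \<Sigma>. x \<in> L \<longleftrightarrow> pda_accepts M (zip x (h (length x)))))}"

definition RFA_Rn :: "nat set \<Rightarrow> nat list set set" where
  "RFA_Rn \<Sigma> = {L. L \<subseteq> lists \<Sigma> \<and> (\<exists>(M :: (nat \<times> nat) dfa) (\<epsilon> :: real) \<Gamma> (D :: nat \<Rightarrow> nat list pmf).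
      finite \<Gamma> \<and> rfa (\<Sigma> \<times> \<Gamma>) M \<and> 0 \<le> \<epsilon> \<and> \<epsilon> < 1/2 \<and>
      (\<forall>n. set_pmf (D n) \<subseteq> {y. length y = n \<and> set y \<subseteq> \<Gamma>}) \<and>
      (\<forall>x \<in> lists \<Sigma>. measure_pmf.prob (D (length x))
          {y. dfa_accepts M (zip x y) \<longleftrightarrow> x \<in> L} \<ge> 1 - \<epsilon>))}"

end

theory Submission
  imports Defs
begin

text \<open>Both separations use languages cut out, at each length n, by a system of parity checks:
  a word passes check i when the sum over its positions p of a value depending on p, on the
  letter at p and on i is even.  A reversible two-state automaton can evaluate the parity of a
  random combination of the checks if the advice at each position names the letters whose
  contribution is odd; a word passing all checks is then accepted with probability 2/3 (an extra
  coin forces rejection with probability 1/3), any other word with probability at most 1/3.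

  The marked palindromes u 2 rev(u) form such a system; they are recognised by a deterministic
  pushdown automaton, but not by a finite automaton with advice, which cannot remember u.

  For the second part, position m + j (m = n div 2) is merged with position \<pi> j of the first
  half and the checks ask that every class contains an even number of ones.  Distinct \<pi> give
  distinct slices, so there are (n div 2)^(n div 2) candidates at length n, whereas a pushdown
  automaton with advice alphabet \<Gamma> realises at most |\<Gamma>|^n slices.  Diagonalising over an
  enumeration of all such automata produces a parity-check language outside CFL/n.\<close>

section \<open>Parity checks with random advice\<close>

definition parity_dfa :: "('i \<Rightarrow> nat) \<Rightarrow> 'i dfa" where
  "parity_dfa w = \<lparr>d_states = {0, 1}, d_init = 0, d_delta = (\<lambda>q a. (q + w a) mod 2), d_final = {1}\<rparr>"

lemma rfa_parity_dfa: "rfa A (parity_dfa w)"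
  unfolding rfa_def dfa_def parity_dfa_def by auto presburger+

lemma foldl_parity_dfa:
  "q < 2 \<Longrightarrow> foldl (d_delta (parity_dfa w)) q xs = (q + sum_list (map w xs)) mod 2"
  by (induction xs arbitrary: q) (simp_all add: parity_dfa_def mod_add_left_eq add.assoc)

lemma parity_dfa_accepts: "dfa_accepts (parity_dfa w) xs \<longleftrightarrow> odd (sum_list (map w xs))"
  using foldl_parity_dfa[of 0 w xs]
  by (simp add: dfa_accepts_def) (simp add: parity_dfa_def odd_iff_mod_2_eq_one)

lemma even_sum_of_bool_odd:
  fixes f :: "'a \<Rightarrow> nat"
  shows "even (\<Sum>p\<in>A. of_bool (odd (f p)) :: nat) \<longleftrightarrow> even (sum f A)"
proof -
  have "(\<Sum>p\<in>A. of_bool (odd (f p)) :: nat) = (\<Sum>p\<in>A. f p mod 2)"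
    by (simp add: of_bool_odd_eq_mod_2)
  then show ?thesis
    by (metis even_iff_mod_2_eq_zero mod_sum_eq)
qed

definition cube :: "nat \<Rightarrow> (nat \<Rightarrow> nat) set" where
  "cube N = PiE {..<N} (\<lambda>_. {0, 1})"

lemma finite_cube: "finite (cube N)"
  by (simp add: cube_def finite_PiE)

lemma cube_nonempty: "cube N \<noteq> {}"
  by (simp add: cube_def PiE_eq_empty_iff)

lemma card_cube: "card (cube N) = 2 ^ N"
  by (simp add: cube_def card_PiE numeral_2_eq_2)

text \<open>Flipping coordinate i swaps the parity, so exactly half of the cube passes.\<close>

lemma card_cube_even_inner:
  fixes c :: "nat \<Rightarrow> nat"
  assumes i: "i < N" and odd_ci: "odd (c i)"
  shows "2 * card {r \<in> cube N. even (\<Sum>j<N. r j * c j)} = card (cube N)"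
proof -
  define inner where "inner r = (\<Sum>j<N. r j * c j)" for r :: "nat \<Rightarrow> nat"
  define flip where "flip r = r(i := 1 - r i)" for r :: "nat \<Rightarrow> nat"
  define Odd where "Odd = {r \<in> cube N. odd (inner r)}"
  define Even where "Even = {r \<in> cube N. even (inner r)}"
  have split: "inner r = r i * c i + (\<Sum>j\<in>{..<N} - {i}. r j * c j)" for r
    unfolding inner_def using i by (simp add: sum.remove)
  have ri: "r i \<in> {0, 1}" if "r \<in> cube N" for r
    using that i by (auto simp: cube_def PiE_iff)
  have flip_parity: "even (inner (flip r)) \<longleftrightarrow> odd (inner r)" if "r \<in> cube N" for r
  proof -
    have "(\<Sum>j\<in>{..<N} - {i}. flip r j * c j) = (\<Sum>j\<in>{..<N} - {i}. r j * c j)"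
      by (rule sum.cong) (simp_all add: flip_def)
    then show ?thesis
      using split[of r] split[of "flip r"] ri[OF that] odd_ci by (auto simp: flip_def)
  qed
  have flip_cube: "flip r \<in> cube N" if "r \<in> cube N" for r
    using that i by (auto simp: cube_def flip_def PiE_iff extensional_def)
  have flip_flip: "flip (flip r) = r" if "r \<in> cube N" for r
    using ri[OF that] by (auto simp: flip_def)
  have "bij_betw flip Odd Even"
    by (rule bij_betw_byWitness[where f' = flip])
      (auto simp: Odd_def Even_def flip_flip flip_cube flip_parity)
  then have "card Odd = card Even"
    by (rule bij_betw_same_card)
  moreover have "card (cube N) = card Odd + card Even"
  proof -
    have "cube N = Odd \<union> Even" "Odd \<inter> Even = {}" "finite Odd" "finite Even"
      by (auto simp: Odd_def Even_def finite_cube)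
    then show ?thesis
      by (simp add: card_Un_disjoint)
  qed
  ultimately show ?thesis
    by (simp add: Even_def inner_def)
qed

lemma measure_coin_and_test:
  assumes "finite B" "B \<noteq> {}"
    and P: "\<And>a r. a \<in> {0, 1, 2} \<Longrightarrow> r \<in> B \<Longrightarrow> P (a, r) \<longleftrightarrow> a \<noteq> 0 \<and> r \<in> T"
  shows "measure_pmf.prob (pmf_of_set ({0, 1, 2 :: nat} \<times> B)) {ar. P ar}
           = 2/3 * card (B \<inter> T) / card B"
proof -
  have "({0, 1, 2} \<times> B) \<inter> {ar. P ar} = {1, 2} \<times> (B \<inter> T)"
    using P by auto
  moreover have "card B > 0"
    using assms by (simp add: card_gt_0_iff)
  ultimately show ?thesis
    using assms by (simp add: measure_pmf_of_set card_cartesian_product)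
qed

definition parity_language ::
    "nat set \<Rightarrow> (nat \<Rightarrow> nat) \<Rightarrow> (nat \<Rightarrow> nat \<Rightarrow> nat \<Rightarrow> nat \<Rightarrow> nat) \<Rightarrow> nat list set" where
  "parity_language \<Sigma> N v = {x \<in> lists \<Sigma>. x \<noteq> [] \<and>
     (\<forall>i < N (length x). even (\<Sum>p < length x. v (length x) p (x ! p) i))}"

definition advice_code :: "nat \<Rightarrow> nat set \<Rightarrow> nat" where
  "advice_code f S = prod_encode (f, set_encode S)"

definition advice_weight :: "nat \<times> nat \<Rightarrow> nat" where
  "advice_weight sg = (case prod_decode (snd sg) of (f, c) \<Rightarrow> f + of_bool (fst sg \<in> set_decode c))"

lemma advice_weight_code: "finite S \<Longrightarrow> advice_weight (s, advice_code f S) = f + of_bool (s \<in> S)"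
  by (simp add: advice_weight_def advice_code_def)

text \<open>The random seed is a coin a \<in> {0, 1, 2} and r \<in> {0, 1}^N.  For a = 0 all weights are zero
  and the word is rejected; otherwise position p receives the letters whose contribution to
  \<Sum>i. r i * check i is odd, and position 0 adds one more, so that acceptance means that this
  combination of the checks is even.\<close>

definition test_advice ::
    "nat set \<Rightarrow> (nat \<Rightarrow> nat) \<Rightarrow> (nat \<Rightarrow> nat \<Rightarrow> nat \<Rightarrow> nat \<Rightarrow> nat) \<Rightarrow> nat \<Rightarrow> nat \<times> (nat \<Rightarrow> nat) \<Rightarrow> nat list" where
  "test_advice \<Sigma> N v n ar = map (\<lambda>p. if fst ar = 0 then advice_code 0 {}
     else advice_code (of_bool (p = 0)) {s \<in> \<Sigma>. odd (\<Sum>i < N n. snd ar i * v n p s i)}) [0..<n]"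

lemma length_test_advice [simp]: "length (test_advice \<Sigma> N v n ar) = n"
  by (simp add: test_advice_def)

lemma set_test_advice:
  "set (test_advice \<Sigma> N v n ar) \<subseteq> (\<lambda>(f, S). advice_code f S) ` ({0, 1} \<times> Pow \<Sigma>)"
  by (auto simp: test_advice_def)

lemma accepts_test_advice:
  assumes x: "x \<in> lists \<Sigma>" and \<Sigma>: "finite \<Sigma>"
  defines "n \<equiv> length x"
  shows "dfa_accepts (parity_dfa advice_weight) (zip x (test_advice \<Sigma> N v n (a, r)))
    \<longleftrightarrow> a \<noteq> 0 \<and> x \<noteq> [] \<and> even (\<Sum>i < N n. r i * (\<Sum>p < n. v n p (x ! p) i))"
proof -
  let ?w = "\<lambda>p. advice_weight (x ! p, test_advice \<Sigma> N v n (a, r) ! p)"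
  let ?t = "\<lambda>p. \<Sum>i < N n. r i * v n p (x ! p) i"
  have weight_sum: "sum_list (map advice_weight (zip x (test_advice \<Sigma> N v n (a, r)))) = (\<Sum>p<n. ?w p)"
    by (simp add: sum_list_sum_nth atLeast0LessThan n_def)
  show ?thesis
  proof (cases "a = 0")
    case True
    then show ?thesis
      unfolding parity_dfa_accepts weight_sum by (simp add: test_advice_def advice_weight_code)
  next
    case False
    have "x ! p \<in> \<Sigma>" if "p < n" for p
      using x that by (auto simp: n_def)
    then have "(\<Sum>p<n. ?w p) = (\<Sum>p<n. of_bool (p = 0) + of_bool (odd (?t p)))"
      using False \<Sigma> by (intro sum.cong) (simp_all add: test_advice_def advice_weight_code)
    also have "\<dots> = of_bool (x \<noteq> []) + (\<Sum>p<n. of_bool (odd (?t p)))"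
      by (simp add: sum.distrib n_def)
    moreover have "even (\<Sum>p<n. of_bool (odd (?t p)) :: nat) \<longleftrightarrow> even (\<Sum>p<n. ?t p)"
      by (rule even_sum_of_bool_odd)
    ultimately have "odd (\<Sum>p<n. ?w p) \<longleftrightarrow> x \<noteq> [] \<and> even (\<Sum>p<n. ?t p)"
      by (cases "x = []") (simp_all add: n_def)
    moreover have "(\<Sum>p<n. ?t p) = (\<Sum>i < N n. r i * (\<Sum>p<n. v n p (x ! p) i))"
      by (simp add: sum.swap[of _ "{..<n}"] sum_distrib_left)
    ultimately show ?thesis
      using False by (simp add: parity_dfa_accepts weight_sum)
  qed
qed

lemma prob_test_advice_correct:
  assumes \<Sigma>: "finite \<Sigma>" and x: "x \<in> lists \<Sigma>"
  defines "n \<equiv> length x"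
  shows "measure_pmf.prob (map_pmf (test_advice \<Sigma> N v n) (pmf_of_set ({0, 1, 2} \<times> cube (N n))))
           {y. dfa_accepts (parity_dfa advice_weight) (zip x y) \<longleftrightarrow> x \<in> parity_language \<Sigma> N v}
         \<ge> 2/3"
proof -
  let ?cls = "\<lambda>i. \<Sum>p<n. v n p (x ! p) i"
  let ?accepts = "\<lambda>ar. dfa_accepts (parity_dfa advice_weight) (zip x (test_advice \<Sigma> N v n ar))"
  let ?R = "pmf_of_set ({0, 1, 2 :: nat} \<times> cube (N n))"
  define T where "T = {r. x \<noteq> [] \<and> even (\<Sum>i < N n. r i * ?cls i)}"
  have accept: "measure_pmf.prob ?R {ar. ?accepts ar} = 2/3 * card (cube (N n) \<inter> T) / card (cube (N n))"
    by (rule measure_coin_and_test) (use accepts_test_advice[OF x \<Sigma>] in \<open>auto simp: finite_cube cube_nonempty T_def n_def\<close>)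
  show ?thesis
  proof (cases "x \<in> parity_language \<Sigma> N v")
    case True
    then have "\<forall>i < N n. even (?cls i)"
      by (simp add: parity_language_def n_def)
    then have "cube (N n) \<inter> T = cube (N n)"
      using True by (auto simp: T_def parity_language_def intro!: dvd_sum)
    then have "measure_pmf.prob ?R {ar. ?accepts ar} = 2/3"
      unfolding accept by (simp add: card_cube)
    then show ?thesis
      using True by (simp add: measure_map_pmf vimage_def)
  next
    case False
    have "2 * card (cube (N n) \<inter> T) \<le> card (cube (N n))"
    proof (cases "x = []")
      case True
      then show ?thesis by (simp add: T_def)
    next
      case False
      with \<open>x \<notin> parity_language \<Sigma> N v\<close> x obtain i where "i < N n" "odd (?cls i)"
        by (auto simp: parity_language_def n_def)
      then have "2 * card {r \<in> cube (N n). even (\<Sum>j < N n. r j * ?cls j)} = card (cube (N n))"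
        by (rule card_cube_even_inner)
      moreover have "cube (N n) \<inter> T = {r \<in> cube (N n). even (\<Sum>j < N n. r j * ?cls j)}"
        using False by (auto simp: T_def)
      ultimately show ?thesis
        by simp
    qed
    then have "real (2 * card (cube (N n) \<inter> T)) \<le> real (card (cube (N n)))"
      by (rule of_nat_mono)
    then have "measure_pmf.prob ?R {ar. ?accepts ar} \<le> 1/3"
      unfolding accept by (simp add: card_cube field_simps)
    moreover have "measure_pmf.prob ?R {ar. \<not> ?accepts ar} = 1 - measure_pmf.prob ?R {ar. ?accepts ar}"
      using measure_pmf.prob_compl[of "{ar. ?accepts ar}" ?R] by (simp add: set_diff_eq)
    ultimately show ?thesis
      using False by (simp add: measure_map_pmf vimage_def)
  qed
qed

theorem parity_language_RFA_Rn:
  assumes "finite \<Sigma>"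
  shows "parity_language \<Sigma> N v \<in> RFA_Rn \<Sigma>"
proof -
  define \<Gamma> where "\<Gamma> = (\<lambda>(f, S). advice_code f S) ` ({0, 1} \<times> Pow \<Sigma>)"
  define D where "D n = map_pmf (test_advice \<Sigma> N v n) (pmf_of_set ({0, 1, 2} \<times> cube (N n)))" for n
  have "set_pmf (D n) \<subseteq> {y. length y = n \<and> set y \<subseteq> \<Gamma>}" for n
    by (auto simp: D_def \<Gamma>_def finite_cube cube_nonempty dest!: subsetD[OF set_test_advice])
  moreover have "finite \<Gamma>"
    using assms by (simp add: \<Gamma>_def)
  ultimately show ?thesis
    unfolding RFA_Rn_def using assms rfa_parity_dfa prob_test_advice_correct
    by (intro CollectI conjI exI[of _ "parity_dfa advice_weight"] exI[of _ "1/3"] exI[of _ \<Gamma>] exI[of _ D])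
      (auto simp: parity_language_def D_def)
qed

section \<open>Diagonalisation against pushdown automata with advice\<close>

definition pda_advice_machines :: "nat set \<Rightarrow> ((nat \<times> nat) pda \<times> nat set) set" where
  "pda_advice_machines \<Sigma> = {(M, \<Gamma>). finite \<Gamma> \<and> pda (\<Sigma> \<times> \<Gamma>) M}"

lemma countable_pda_advice_machines: "countable (pda_advice_machines \<Sigma>)"
proof -
  define f where "f = (\<lambda>(M :: (nat \<times> nat) pda, \<Gamma> :: nat set).
     (p_states M, p_stack M, p_init M, p_bottom M, p_final M, p_trans M, \<Gamma>))"
  have inj: "inj f"
    by (rule injI) (auto simp: f_def pda.equality split: prod.splits)
  have countable_codomain: "countable ((Collect finite :: nat set set) \<times> (Collect finite :: nat set set)
      \<times> (UNIV :: nat set) \<times> (UNIV :: nat set) \<times> (Collect finite :: nat set set)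
      \<times> (Collect finite :: (nat \<times> (nat \<times> nat) option \<times> nat \<times> nat \<times> nat list) set set)
      \<times> (Collect finite :: nat set set))" (is "countable ?C")
    by (intro countable_SIGMA countable_Collect_finite) auto
  have "pda_advice_machines \<Sigma> \<subseteq> {x. f x \<in> ?C}"
    unfolding pda_advice_machines_def f_def pda_def by (auto intro: finite_subset)
  then show ?thesis
    by (rule countable_subset[OF _ countable_image_inj[OF countable_codomain inj]])
qed

definition pda_advice_slices ::
    "nat set \<Rightarrow> (nat \<times> nat) pda \<Rightarrow> nat set \<Rightarrow> nat \<Rightarrow> nat list set set" where
  "pda_advice_slices \<Sigma> M \<Gamma> n = (\<lambda>w. {x \<in> lists \<Sigma>. length x = n \<and> pda_accepts M (zip x w)})
     ` {w. set w \<subseteq> \<Gamma> \<and> length w = n}"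

lemma finite_pda_advice_slices: "finite \<Gamma> \<Longrightarrow> finite (pda_advice_slices \<Sigma> M \<Gamma> n)"
  by (simp add: pda_advice_slices_def finite_lists_length_eq)

lemma card_pda_advice_slices_le: "finite \<Gamma> \<Longrightarrow> card (pda_advice_slices \<Sigma> M \<Gamma> n) \<le> card \<Gamma> ^ n"
  unfolding pda_advice_slices_def
  by (rule order_trans[OF card_image_le]) (simp_all add: finite_lists_length_eq card_lists_length_eq)

lemma CFL_n_slices_realized:
  assumes "L \<in> CFL_n \<Sigma>"
  obtains M \<Gamma> where "(M, \<Gamma>) \<in> pda_advice_machines \<Sigma>"
    "\<And>n. {x \<in> L. length x = n} \<in> pda_advice_slices \<Sigma> M \<Gamma> n"
proof -
  obtain M \<Gamma> h where "L \<subseteq> lists \<Sigma>" "finite \<Gamma>" "pda (\<Sigma> \<times> \<Gamma>) M" and h: "advice_fun \<Gamma> h"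
    and accepts: "\<forall>x \<in> lists \<Sigma>. x \<in> L \<longleftrightarrow> pda_accepts M (zip x (h (length x)))"
    using assms unfolding CFL_n_def by blast
  then have "{x \<in> L. length x = n} = {x \<in> lists \<Sigma>. length x = n \<and> pda_accepts M (zip x (h n))}" for n
    by auto
  then have "{x \<in> L. length x = n} \<in> pda_advice_slices \<Sigma> M \<Gamma> n" for n
    using h unfolding pda_advice_slices_def advice_fun_def by blast
  then show ?thesis
    using that \<open>finite \<Gamma>\<close> \<open>pda (\<Sigma> \<times> \<Gamma>) M\<close> by (simp add: pda_advice_machines_def)
qed

lemma diagonal_language_not_CFL_n:
  fixes slice :: "nat \<Rightarrow> 'a \<Rightarrow> nat list set"
  assumes slice_words: "\<And>n a. a \<in> P n \<Longrightarrow> slice n a \<subseteq> {x \<in> lists \<Sigma>. length x = n}"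
    and nonempty: "\<And>n. P n \<noteq> {}"
    and many: "\<And>g :: nat. \<exists>N. \<forall>n \<ge> N. g ^ n < card (slice n ` P n)"
  shows "\<exists>\<rho>. (\<forall>n. \<rho> n \<in> P n) \<and> (\<Union>n. slice n (\<rho> n)) \<notin> CFL_n \<Sigma>"
proof -
  txt \<open>The slice at length n defeats the machine with index fst (prod_decode n); as
    prod_encode (i, N) \<ge> N, every machine is attacked at arbitrarily large lengths.\<close>
  define enum where "enum = from_nat_into (pda_advice_machines \<Sigma>)"
  define realized where "realized n = (case enum (fst (prod_decode n)) of (M, \<Gamma>) \<Rightarrow>
      pda_advice_slices \<Sigma> M \<Gamma> n)" for n
  have "\<forall>n. \<exists>a. a \<in> P n \<and> (slice n ` P n \<subseteq> realized n \<or> slice n a \<notin> realized n)"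
    using nonempty by blast
  then obtain \<rho> where \<rho>: "\<And>n. \<rho> n \<in> P n"
    and diag: "\<And>n. slice n ` P n \<subseteq> realized n \<or> slice n (\<rho> n) \<notin> realized n"
    by (auto dest!: choice)
  let ?L = "\<Union>n. slice n (\<rho> n)"
  have "?L \<notin> CFL_n \<Sigma>"
  proof
    assume "?L \<in> CFL_n \<Sigma>"
    then obtain M \<Gamma> where machine: "(M, \<Gamma>) \<in> pda_advice_machines \<Sigma>"
      and slices: "\<And>n. {x \<in> ?L. length x = n} \<in> pda_advice_slices \<Sigma> M \<Gamma> n"
      by (auto elim: CFL_n_slices_realized)
    then obtain i where i: "enum i = (M, \<Gamma>)"
      using from_nat_into_surj[OF countable_pda_advice_machines] by (metis enum_def)
    obtain N where N: "\<forall>n \<ge> N. card \<Gamma> ^ n < card (slice n ` P n)"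
      using many by blast
    define n where "n = prod_encode (i, N)"
    have realized_n: "realized n = pda_advice_slices \<Sigma> M \<Gamma> n"
      by (simp add: realized_def n_def i)
    have "finite \<Gamma>"
      using machine by (simp add: pda_advice_machines_def)
    then have "card (realized n) \<le> card \<Gamma> ^ n"
      using card_pda_advice_slices_le by (simp add: realized_n)
    also have "\<dots> < card (slice n ` P n)"
      using N le_prod_encode_2[of N i] by (simp add: n_def)
    finally have "\<not> slice n ` P n \<subseteq> realized n"
      using finite_pda_advice_slices[OF \<open>finite \<Gamma>\<close>] card_mono realized_n by (metis not_le)
    moreover have "slice n (\<rho> n) = {x \<in> ?L. length x = n}"
      using slice_words[OF \<rho>] by blast
    then have "slice n (\<rho> n) \<in> realized n"
      using slices realized_n by simp
    ultimately show False
      using diag by blast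
  qed
  then show ?thesis
    using \<rho> by blast
qed

lemma power_less_half_power_half: "\<exists>N. \<forall>n \<ge> N. (g :: nat) ^ n < (n div 2) ^ (n div 2)"
proof (intro exI allI impI)
  fix n assume n: "n \<ge> 4 * (g * g) + 4"
  define m where "m = n div 2"
  have m: "m \<ge> 2 * (g * g) + 2" "n \<le> 2 * m + 1"
    using n by (auto simp: m_def)
  show "g ^ n < (n div 2) ^ (n div 2)"
  proof (cases "g = 0")
    case True
    have "0 < n" "0 < n div 2"
      using n by auto
    then show ?thesis
      using True by (simp add: zero_power)
  next
    case False
    have "g ^ n \<le> g ^ (2 * m + 1)"
      using False m by (intro power_increasing) auto
    also have "\<dots> = g * (g * g) ^ m"
      by (simp add: power_mult power2_eq_square[symmetric] power_add)
    also have "\<dots> < 2 ^ m * (g * g) ^ m"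
    proof -
      have "g \<le> m"
        using m by (metis add_leD1 le_add2 le_square mult_2 order.trans)
      then have "g < 2 ^ m"
        using less_exp[of g] power_increasing[of g m "2 :: nat"] by linarith
      then show ?thesis
        using False by simp
    qed
    also have "\<dots> = (2 * (g * g)) ^ m"
      by (simp add: power_mult_distrib)
    also have "\<dots> \<le> m ^ m"
      using m by (intro power_mono) auto
    finally show ?thesis
      by (simp add: m_def)
  qed
qed

definition class_of :: "nat \<Rightarrow> (nat \<Rightarrow> nat) \<Rightarrow> nat \<Rightarrow> nat" where
  "class_of n \<pi> p = (if n div 2 \<le> p \<and> p < 2 * (n div 2) then \<pi> (p - n div 2) else p)"

definition class_weight :: "nat \<Rightarrow> (nat \<Rightarrow> nat) \<Rightarrow> nat list \<Rightarrow> nat \<Rightarrow> nat" where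
  "class_weight n \<pi> x i = (\<Sum>p<n. if class_of n \<pi> p = i then x ! p else 0)"

definition balanced_slice :: "nat \<Rightarrow> (nat \<Rightarrow> nat) \<Rightarrow> nat list set" where
  "balanced_slice n \<pi> = {x \<in> lists {0, 1}. length x = n \<and> x \<noteq> [] \<and> (\<forall>i<n. even (class_weight n \<pi> x i))}"

definition half_maps :: "nat \<Rightarrow> (nat \<Rightarrow> nat) set" where
  "half_maps n = PiE {..<n div 2} (\<lambda>_. {..<n div 2})"

lemma class_weight_two_ones:
  assumes "a < n" "b < n" "a \<noteq> b"
  shows "class_weight n \<pi> (map (\<lambda>p. of_bool (p = a \<or> p = b)) [0..<n]) i
           = of_bool (class_of n \<pi> a = i) + of_bool (class_of n \<pi> b = i)"
proof -
  have "class_weight n \<pi> (map (\<lambda>p. of_bool (p = a \<or> p = b)) [0..<n]) i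
      = (\<Sum>p<n. (if p = a then of_bool (class_of n \<pi> a = i) else 0)
             + (if p = b then of_bool (class_of n \<pi> b = i) else 0))"
    unfolding class_weight_def using assms by (intro sum.cong) auto
  then show ?thesis
    using assms by (simp add: sum.distrib)
qed

lemma inj_on_balanced_slice: "inj_on (balanced_slice n) (half_maps n)"
proof (rule inj_onI, rule ccontr)
  fix \<pi> \<pi>' assume \<pi>: "\<pi> \<in> half_maps n" and \<pi>': "\<pi>' \<in> half_maps n"
    and same: "balanced_slice n \<pi> = balanced_slice n \<pi>'" and "\<pi> \<noteq> \<pi>'"
  define m where "m = n div 2"
  obtain j where j: "j < m" "\<pi> j \<noteq> \<pi>' j"
    using \<pi> \<pi>' \<open>\<pi> \<noteq> \<pi>'\<close> unfolding half_maps_def m_def by (metis PiE_ext lessThan_iff)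
  define a where "a = \<pi> j"
  define b where "b = m + j"
  have "a < m"
    using \<pi> j by (auto simp: a_def half_maps_def m_def PiE_iff)
  then have ab: "a < n" "b < n" "a \<noteq> b"
    using j by (auto simp: b_def m_def)
  have class_a: "class_of n \<rho> a = a" and class_b: "class_of n \<rho> b = \<rho> j" for \<rho>
    using \<open>a < m\<close> j by (auto simp: class_of_def m_def b_def)
  define x :: "nat list" where "x = map (\<lambda>p. of_bool (p = a \<or> p = b)) [0..<n]"
  have x: "x \<in> lists {0, 1}" "length x = n" "x \<noteq> []"
    using ab by (auto simp: x_def)
  have "class_weight n \<pi> x i = 2 * of_bool (a = i)" for i
    using class_weight_two_ones[OF ab, of \<pi> i] class_b[of \<pi>, folded a_def]
    by (simp add: x_def class_a)
  then have "x \<in> balanced_slice n \<pi>"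
    using x by (simp add: balanced_slice_def)
  moreover have "class_weight n \<pi>' x a = 1"
    using class_weight_two_ones[OF ab, of \<pi>' a] class_a[of \<pi>'] class_b[of \<pi>'] j(2)[folded a_def]
    by (simp add: x_def)
  then have "x \<notin> balanced_slice n \<pi>'"
    using ab by (auto simp: balanced_slice_def)
  ultimately show False
    using same by simp
qed

lemma card_balanced_slices: "card (balanced_slice n ` half_maps n) = (n div 2) ^ (n div 2)"
  unfolding card_image[OF inj_on_balanced_slice] by (simp add: half_maps_def card_PiE)

lemma balanced_parity_language_not_CFL_n:
  "\<exists>\<rho>. parity_language {0, 1} (\<lambda>n. n) (\<lambda>n p s i. if class_of n (\<rho> n) p = i then s else 0)
          \<notin> CFL_n {0, 1}"
proof -
  have "\<exists>\<rho>. (\<forall>n. \<rho> n \<in> half_maps n) \<and> (\<Union>n. balanced_slice n (\<rho> n)) \<notin> CFL_n {0, 1}"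
  proof (rule diagonal_language_not_CFL_n)
    show "\<And>n. half_maps n \<noteq> {}"
      by (auto simp: half_maps_def PiE_eq_empty_iff)
    show "\<exists>N. \<forall>n\<ge>N. g ^ n < card (balanced_slice n ` half_maps n)" for g
      by (simp add: card_balanced_slices power_less_half_power_half)
  qed (auto simp: balanced_slice_def)
  then obtain \<rho> where "(\<Union>n. balanced_slice n (\<rho> n)) \<notin> CFL_n {0, 1}"
    by blast
  moreover have "(\<Union>n. balanced_slice n (\<rho> n))
      = parity_language {0, 1} (\<lambda>n. n) (\<lambda>n p s i. if class_of n (\<rho> n) p = i then s else 0)"
    by (auto simp: balanced_slice_def parity_language_def class_weight_def)
  ultimately show ?thesis
    by auto
qed

section \<open>Marked palindromes\<close>

definition marked_palindromes :: "nat list set" where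
  "marked_palindromes = {u @ 2 # rev u | u. u \<in> lists {0, 1}}"

lemma marked_palindromes_iff:
  "x \<in> marked_palindromes \<longleftrightarrow> x \<in> lists {0, 1, 2} \<and> odd (length x) \<and> rev x = x
     \<and> (\<forall>p < length x. x ! p = 2 \<longleftrightarrow> 2 * p + 1 = length x)"
proof
  assume "x \<in> marked_palindromes"
  then obtain u where u: "u \<in> lists {0, 1}" "x = u @ 2 # rev u"
    by (auto simp: marked_palindromes_def)
  have no_marker: "2 \<notin> set u"
    using u by auto
  have "x ! p = 2 \<longleftrightarrow> p = length u" if "p < length x" for p
  proof -
    consider "p < length u" | "p = length u" | "length u < p"
      by linarith
    then show ?thesis
    proof cases
      case 1
      then show ?thesis
        using u(2) no_marker by (auto simp: nth_append) (metis nth_mem)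
    next
      case 3
      then have "x ! p = rev u ! (p - Suc (length u))" "p - Suc (length u) < length (rev u)"
        using u that by (auto simp: nth_append nth_Cons')
      then show ?thesis
        using 3 no_marker nth_mem[of "p - Suc (length u)" "rev u"] by auto
    qed (use u in simp)
  qed
  then show "x \<in> lists {0, 1, 2} \<and> odd (length x) \<and> rev x = x
     \<and> (\<forall>p < length x. x ! p = 2 \<longleftrightarrow> 2 * p + 1 = length x)"
    using u by auto
next
  assume x: "x \<in> lists {0, 1, 2} \<and> odd (length x) \<and> rev x = x
     \<and> (\<forall>p < length x. x ! p = 2 \<longleftrightarrow> 2 * p + 1 = length x)"
  then obtain m where m: "length x = 2 * m + 1"
    by (metis oddE)
  have "x = take m x @ x ! m # drop (Suc m) x"
    using m by (simp add: id_take_nth_drop)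
  moreover have "take m x = rev (drop (Suc m) x)"
    using x m take_rev[of m x] by simp
  moreover have "x ! m = 2"
    using x m by simp
  moreover have "set (take m x) \<subseteq> {0, 1}"
  proof
    fix s assume "s \<in> set (take m x)"
    then obtain p where "p < m" "s = x ! p"
      using m by (auto simp: in_set_conv_nth)
    then show "s \<in> {0, 1}"
      using x m nth_mem[of p x] by auto
  qed
  ultimately show "x \<in> marked_palindromes"
    unfolding marked_palindromes_def lists_eq_set by (metis (mono_tags, lifting) mem_Collect_eq rev_rev_ident)
qed

text \<open>Check i < n compares the ones at positions i and n - 1 - i, check n + p says that position p
  carries the marker 2 exactly when it is the centre, and check 2 n rejects even lengths.\<close>

definition marked_palindrome_checks :: "nat \<Rightarrow> nat \<Rightarrow> nat \<Rightarrow> nat \<Rightarrow> nat" where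
  "marked_palindrome_checks n p s i =
     (if i < n then (if p = i then of_bool (s = 1) else 0) + (if p = n - Suc i then of_bool (s = 1) else 0)
      else if i < 2 * n then (if p = i - n then of_bool ((s = 2) \<noteq> (2 * p + 1 = n)) else 0)
      else if p = 0 then of_bool (even n) else 0)"

lemma sum_marked_palindrome_checks:
  assumes "length x = n"
  shows "(\<Sum>p<n. marked_palindrome_checks n p (x ! p) i) =
     (if i < n then of_bool (x ! i = 1) + of_bool (x ! (n - Suc i) = 1)
      else if i < 2 * n then of_bool ((x ! (i - n) = 2) \<noteq> (2 * (i - n) + 1 = n))
      else of_bool (0 < n \<and> even n))"
  unfolding marked_palindrome_checks_def by (auto simp: sum.distrib)

lemma palindrome_iff_ones_symmetric:
  fixes x :: "nat list"
  assumes "set x \<subseteq> {0, 1, 2}" and markers: "\<forall>p < length x. x ! p = 2 \<longleftrightarrow> 2 * p + 1 = length x"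
  shows "rev x = x \<longleftrightarrow> (\<forall>i < length x. x ! i = 1 \<longleftrightarrow> x ! (length x - Suc i) = 1)"
proof -
  have pointwise: "x ! (length x - Suc i) = x ! i \<longleftrightarrow> (x ! i = 1 \<longleftrightarrow> x ! (length x - Suc i) = 1)"
    if "i < length x" for i
  proof -
    have "length x - Suc i < length x"
      using that by simp
    then have "x ! i \<in> {0, 1, 2}" "x ! (length x - Suc i) \<in> {0, 1, 2}"
      using assms(1) nth_mem[OF that] nth_mem[of "length x - Suc i" x] by (simp_all add: subset_iff)
    moreover have "x ! i = 2 \<longleftrightarrow> x ! (length x - Suc i) = 2"
      using markers that by auto
    ultimately show ?thesis
      by auto
  qed
  have "rev x = x \<longleftrightarrow> (\<forall>i < length x. x ! (length x - Suc i) = x ! i)"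
    by (simp add: list_eq_iff_nth_eq rev_nth)
  with pointwise show ?thesis
    by blast
qed

lemma all_less_three_blocks:
  fixes n :: nat
  shows "(\<forall>i < 2 * n + 1. P i) \<longleftrightarrow> (\<forall>i < n. P i) \<and> (\<forall>p < n. P (n + p)) \<and> P (2 * n)"
proof (intro iffI allI impI)
  fix i
  assume blocks: "(\<forall>i < n. P i) \<and> (\<forall>p < n. P (n + p)) \<and> P (2 * n)" and "i < 2 * n + 1"
  then consider "i < n" | "n \<le> i" "i < 2 * n" | "i = 2 * n"
    by linarith
  then show "P i"
    by cases (use blocks in \<open>auto dest: spec[of _ "i - n"]\<close>)
qed auto

lemma marked_palindrome_checks_iff:
  assumes "length x = n"
  shows "(\<forall>i < 2 * n + 1. even (\<Sum>p<n. marked_palindrome_checks n p (x ! p) i))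
    \<longleftrightarrow> (\<forall>i < n. x ! i = 1 \<longleftrightarrow> x ! (n - Suc i) = 1) \<and> (\<forall>p < n. x ! p = 2 \<longleftrightarrow> 2 * p + 1 = n)
        \<and> (n = 0 \<or> odd n)"
  unfolding all_less_three_blocks sum_marked_palindrome_checks[OF assms] by auto

lemma marked_palindromes_parity_language:
  "marked_palindromes = parity_language {0, 1, 2} (\<lambda>n. 2 * n + 1) marked_palindrome_checks"
proof (rule set_eqI)
  fix x :: "nat list"
  let ?markers = "\<forall>p < length x. x ! p = 2 \<longleftrightarrow> 2 * p + 1 = length x"
  let ?ones = "\<forall>i < length x. x ! i = 1 \<longleftrightarrow> x ! (length x - Suc i) = 1"
  have "x \<in> parity_language {0, 1, 2} (\<lambda>n. 2 * n + 1) marked_palindrome_checks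
      \<longleftrightarrow> x \<in> lists {0, 1, 2} \<and> x \<noteq> [] \<and> ?ones \<and> ?markers \<and> (length x = 0 \<or> odd (length x))"
    using marked_palindrome_checks_iff[of x "length x"] by (simp add: parity_language_def)
  moreover have "x \<in> lists {0, 1, 2} \<Longrightarrow> ?markers \<Longrightarrow> rev x = x \<longleftrightarrow> ?ones"
    by (rule palindrome_iff_ones_symmetric) auto
  ultimately show "x \<in> marked_palindromes
      \<longleftrightarrow> x \<in> parity_language {0, 1, 2} (\<lambda>n. 2 * n + 1) marked_palindrome_checks"
    unfolding marked_palindromes_iff by auto
qed

lemma marked_palindromes_lists: "marked_palindromes \<subseteq> lists {0, 1, 2}"
  by (auto simp: marked_palindromes_iff)

text \<open>State 0 pushes the letters before the marker, state 1 pops matching letters, and reaching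
  the bottom symbol 5 leads to the final state 2.\<close>

definition marked_palindrome_trans :: "(nat \<times> nat option \<times> nat \<times> nat \<times> nat list) set" where
  "marked_palindrome_trans = (\<lambda>(b, Z). (0, Some b, Z, 0, [b, Z])) ` ({0, 1} \<times> {0, 1, 5})
     \<union> (\<lambda>Z. (0, Some 2, Z, 1, [Z])) ` {0, 1, 5}
     \<union> (\<lambda>b. (1, Some b, b, 1, [])) ` {0, 1}
     \<union> {(1, None, 5, 2, [5])}"

definition marked_palindrome_pda :: "nat pda" where
  "marked_palindrome_pda = \<lparr>p_states = {0, 1, 2}, p_stack = {0, 1, 5}, p_init = 0, p_bottom = 5,
     p_final = {2}, p_trans = marked_palindrome_trans\<rparr>"

lemma marked_palindrome_pda_accepts_iff:
  "pda_accepts marked_palindrome_pda w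
     \<longleftrightarrow> (\<exists>\<gamma>. (pda_step marked_palindrome_pda)\<^sup>*\<^sup>* (0, w, [5]) (2, [], \<gamma>))"
proof -
  have "p_init marked_palindrome_pda = 0" "p_bottom marked_palindrome_pda = 5"
    "p_final marked_palindrome_pda = {2}"
    by (simp_all add: marked_palindrome_pda_def)
  then show ?thesis
    by (simp add: pda_accepts_def)
qed

lemma marked_palindrome_pda_trans_iff:
  "(q, a, Z, p, \<alpha>) \<in> p_trans marked_palindrome_pda \<longleftrightarrow>
     q = 0 \<and> p = 0 \<and> (\<exists>b. b \<in> {0, 1} \<and> a = Some b \<and> Z \<in> {0, 1, 5} \<and> \<alpha> = [b, Z]) \<or>
     q = 0 \<and> p = 1 \<and> a = Some 2 \<and> Z \<in> {0, 1, 5} \<and> \<alpha> = [Z] \<or>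
     q = 1 \<and> p = 1 \<and> (\<exists>b. b \<in> {0, 1} \<and> a = Some b \<and> Z = b \<and> \<alpha> = []) \<or>
     q = 1 \<and> p = 2 \<and> a = None \<and> Z = 5 \<and> \<alpha> = [5]"
  unfolding marked_palindrome_pda_def marked_palindrome_trans_def pda.simps
    image_iff Un_iff singleton_iff Bex_def mem_Sigma_iff
  apply (rule iffI)
   apply (elim disjE exE conjE; simp split: prod.splits)
  apply (elim disjE exE conjE; simp)
  apply force
  done

lemma dpda_marked_palindrome_pda: "dpda {0, 1, 2} marked_palindrome_pda"
proof -
  have "finite (p_trans marked_palindrome_pda)"
    by (simp add: marked_palindrome_pda_def marked_palindrome_trans_def)
  moreover have "\<forall>(q, a, Z, p, \<alpha>) \<in> p_trans marked_palindrome_pda. q \<in> {0, 1, 2} \<and> p \<in> {0, 1, 2} \<and>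
      Z \<in> {0, 1, 5} \<and> set \<alpha> \<subseteq> {0, 1, 5} \<and> (\<forall>b. a = Some b \<longrightarrow> b \<in> {0, 1, 2})"
    by (clarify, unfold marked_palindrome_pda_trans_iff) auto
  ultimately have "pda {0, 1, 2} marked_palindrome_pda"
    by (simp add: pda_def marked_palindrome_pda_def)
  then show ?thesis
    unfolding dpda_def marked_palindrome_pda_trans_iff by auto
qed

lemma marked_palindrome_pda_step_cases:
  assumes "pda_step marked_palindrome_pda (q, w, s) (p, w', s')"
  shows "q = 0 \<and> p = 0 \<and> (\<exists>a Z \<gamma>. a \<in> {0, 1} \<and> w = a # w' \<and> s = Z # \<gamma> \<and> s' = a # Z # \<gamma>)
       \<or> q = 0 \<and> p = 1 \<and> w = 2 # w' \<and> s' = s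
       \<or> q = 1 \<and> p = 1 \<and> (\<exists>a. a \<in> {0, 1} \<and> w = a # w' \<and> s = a # s')
       \<or> q = 1 \<and> p = 2 \<and> w' = w \<and> (\<exists>\<gamma>. s = 5 # \<gamma> \<and> s' = 5 # \<gamma>)"
proof -
  obtain Z \<gamma> \<alpha> where s: "s = Z # \<gamma>" "s' = \<alpha> @ \<gamma>"
    and "(\<exists>a. w = a # w' \<and> (q, Some a, Z, p, \<alpha>) \<in> p_trans marked_palindrome_pda)
         \<or> (w' = w \<and> (q, None, Z, p, \<alpha>) \<in> p_trans marked_palindrome_pda)"
    using assms unfolding pda_step_def by auto
  then show ?thesis
    unfolding marked_palindrome_pda_trans_iff by (elim disjE exE conjE) auto
qed

lemma marked_palindrome_pda_push:
  "a \<in> {0, 1} \<Longrightarrow> Z \<in> {0, 1, 5}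
    \<Longrightarrow> pda_step marked_palindrome_pda (0, a # w, Z # \<gamma>) (0, w, a # Z # \<gamma>)"
  unfolding pda_step_def by (auto simp: marked_palindrome_pda_trans_iff)

lemma marked_palindrome_pda_mid:
  "Z \<in> {0, 1, 5} \<Longrightarrow> pda_step marked_palindrome_pda (0, 2 # w, Z # \<gamma>) (1, w, Z # \<gamma>)"
  unfolding pda_step_def by (auto simp: marked_palindrome_pda_trans_iff intro!: exI[of _ "[Z]"])

lemma marked_palindrome_pda_pop:
  "a \<in> {0, 1} \<Longrightarrow> pda_step marked_palindrome_pda (1, a # w, a # \<gamma>) (1, w, \<gamma>)"
  unfolding pda_step_def by (auto simp: marked_palindrome_pda_trans_iff)

lemma marked_palindrome_pda_accept: "pda_step marked_palindrome_pda (1, w, 5 # \<gamma>) (2, w, 5 # \<gamma>)"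
  unfolding pda_step_def by (auto simp: marked_palindrome_pda_trans_iff intro!: exI[of _ "[5]"])

lemma marked_palindrome_pda_push_run:
  "u \<in> lists {0, 1} \<Longrightarrow> Z \<in> {0, 1, 5} \<Longrightarrow>
     (pda_step marked_palindrome_pda)\<^sup>*\<^sup>* (0, u @ w, Z # \<gamma>) (0, w, rev u @ Z # \<gamma>)"
proof (induction u arbitrary: Z \<gamma>)
  case (Cons a u)
  have "pda_step marked_palindrome_pda (0, a # u @ w, Z # \<gamma>) (0, u @ w, a # Z # \<gamma>)"
    using Cons.prems by (intro marked_palindrome_pda_push) auto
  moreover have "(pda_step marked_palindrome_pda)\<^sup>*\<^sup>* (0, u @ w, a # Z # \<gamma>) (0, w, rev u @ a # Z # \<gamma>)"
    using Cons by auto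
  ultimately show ?case
    by simp
qed simp

lemma marked_palindrome_pda_pop_run:
  "v \<in> lists {0, 1} \<Longrightarrow> (pda_step marked_palindrome_pda)\<^sup>*\<^sup>* (1, v @ w, v @ \<gamma>) (1, w, \<gamma>)"
proof (induction v)
  case (Cons a v)
  have "pda_step marked_palindrome_pda (1, a # v @ w, a # v @ \<gamma>) (1, v @ w, v @ \<gamma>)"
    using Cons.prems by (intro marked_palindrome_pda_pop) auto
  then show ?case
    using Cons by simp
qed simp

text \<open>In state 1, z is the part of rev u that is still on the stack.\<close>

definition marked_palindrome_inv :: "nat list \<Rightarrow> nat \<times> nat list \<times> nat list \<Rightarrow> bool" where
  "marked_palindrome_inv x c = (case c of (q, w, s) \<Rightarrow>
     q = 0 \<and> (\<exists>u \<in> lists {0, 1}. x = u @ w \<and> s = rev u @ [5]) \<or>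
     q = 1 \<and> (\<exists>u \<in> lists {0, 1}. \<exists>v z. x = u @ 2 # v @ w \<and> rev u = v @ z \<and> s = z @ [5]) \<or>
     q = 2 \<and> (\<exists>u \<in> lists {0, 1}. x = u @ 2 # rev u @ w \<and> s = [5]))"

lemma marked_palindrome_invI0:
  "u \<in> lists {0, 1} \<Longrightarrow> x = u @ w \<Longrightarrow> s = rev u @ [5] \<Longrightarrow> marked_palindrome_inv x (0, w, s)"
  unfolding marked_palindrome_inv_def by auto

lemma marked_palindrome_invI1:
  "u \<in> lists {0, 1} \<Longrightarrow> x = u @ 2 # v @ w \<Longrightarrow> rev u = v @ z \<Longrightarrow> s = z @ [5]
    \<Longrightarrow> marked_palindrome_inv x (1, w, s)"
  unfolding marked_palindrome_inv_def by auto

lemma marked_palindrome_invI2: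
  "u \<in> lists {0, 1} \<Longrightarrow> x = u @ 2 # rev u @ w \<Longrightarrow> s = [5] \<Longrightarrow> marked_palindrome_inv x (2, w, s)"
  unfolding marked_palindrome_inv_def by auto

lemma marked_palindrome_inv_step:
  assumes inv: "marked_palindrome_inv x (q, w, s)"
    and step: "pda_step marked_palindrome_pda (q, w, s) (p, w', s')"
  shows "marked_palindrome_inv x (p, w', s')"
  using marked_palindrome_pda_step_cases[OF step]
proof (elim disjE conjE exE)
  fix a Z \<gamma> assume h: "q = 0" "p = 0" "a \<in> {0, 1}" "w = a # w'" "s = Z # \<gamma>" "s' = a # Z # \<gamma>"
  then obtain u where u: "u \<in> lists {0, 1}" "x = u @ w" "s = rev u @ [5]"
    using inv unfolding marked_palindrome_inv_def by auto
  have "u @ [a] \<in> lists {0, 1}" "x = (u @ [a]) @ w'" "s' = rev (u @ [a]) @ [5]"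
    using u h by auto
  then show ?thesis
    unfolding h(2) by (rule marked_palindrome_invI0)
next
  assume h: "q = 0" "p = 1" "w = 2 # w'" "s' = s"
  then obtain u where u: "u \<in> lists {0, 1}" "x = u @ w" "s = rev u @ [5]"
    using inv unfolding marked_palindrome_inv_def by auto
  have "x = u @ 2 # [] @ w'" "rev u = [] @ rev u" "s' = rev u @ [5]"
    using u h by auto
  then show ?thesis
    unfolding h(2) by (rule marked_palindrome_invI1[OF u(1)])
next
  fix a assume h: "q = 1" "p = 1" "a \<in> {0, 1}" "w = a # w'" "s = a # s'"
  then obtain u v z where u: "u \<in> lists {0, 1}" "x = u @ 2 # v @ w" "rev u = v @ z" "s = z @ [5]"
    using inv unfolding marked_palindrome_inv_def by auto
  obtain z' where z: "z = a # z'"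
    using u(4) h(3,5) by (cases z) auto
  have "x = u @ 2 # (v @ [a]) @ w'" "rev u = (v @ [a]) @ z'" "s' = z' @ [5]"
    using u h z by auto
  then show ?thesis
    unfolding h(2) by (rule marked_palindrome_invI1[OF u(1)])
next
  fix \<gamma> assume h: "q = 1" "p = 2" "w' = w" "s = 5 # \<gamma>" "s' = 5 # \<gamma>"
  then obtain u v z where u: "u \<in> lists {0, 1}" "x = u @ 2 # v @ w" "rev u = v @ z" "s = z @ [5]"
    using inv unfolding marked_palindrome_inv_def by auto
  have "set z \<subseteq> {0, 1}"
    using u(1,3) by (metis in_listsD set_append set_rev subset_code(1) sup.cobounded2 subsetD)
  then have "z = []"
    using u(4) h(4) by (cases z) auto
  then have "x = u @ 2 # rev u @ w'" "s' = [5]"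
    using u h by auto
  then show ?thesis
    unfolding h(2) by (rule marked_palindrome_invI2[OF u(1)])
qed

lemma marked_palindrome_inv_run:
  "(pda_step marked_palindrome_pda)\<^sup>*\<^sup>* (0, x, [5]) c \<Longrightarrow> marked_palindrome_inv x c"
proof (induction rule: rtranclp_induct)
  case base
  then show ?case
    by (rule marked_palindrome_invI0[of "[]"]) simp_all
next
  case (step b c)
  then show ?case
    using marked_palindrome_inv_step by (metis prod_cases3)
qed

lemma marked_palindrome_pda_accepts_marked_palindromes:
  assumes "u \<in> lists {0, 1}"
  shows "pda_accepts marked_palindrome_pda (u @ 2 # rev u)"
proof -
  have ru: "rev u \<in> lists {0, 1}"
    using assms by auto
  have "(pda_step marked_palindrome_pda)\<^sup>*\<^sup>* (0, u @ 2 # rev u, [5]) (0, 2 # rev u, rev u @ [5])"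
    using marked_palindrome_pda_push_run[OF assms, of 5 "2 # rev u" "[]"] by simp
  moreover have "pda_step marked_palindrome_pda (0, 2 # rev u, rev u @ [5]) (1, rev u, rev u @ [5])"
  proof (cases "rev u")
    case Nil
    then show ?thesis
      using marked_palindrome_pda_mid[of 5 "[]" "[]"] by simp
  next
    case (Cons a t)
    then have "a \<in> {0, 1, 5}"
      using ru by auto
    then show ?thesis
      using marked_palindrome_pda_mid[of a "rev u" "t @ [5]"] Cons by simp
  qed
  moreover have "(pda_step marked_palindrome_pda)\<^sup>*\<^sup>* (1, rev u, rev u @ [5]) (1, [], [5])"
    using marked_palindrome_pda_pop_run[OF ru, of "[]" "[5]"] by simp
  moreover have "pda_step marked_palindrome_pda (1, [], [5]) (2, [], [5])"
    using marked_palindrome_pda_accept[of "[]" "[]"] by simp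
  ultimately have "(pda_step marked_palindrome_pda)\<^sup>*\<^sup>* (0, u @ 2 # rev u, [5]) (2, [], [5])"
    by (meson rtranclp.rtrancl_into_rtrancl rtranclp_trans)
  then show ?thesis
    by (auto simp: marked_palindrome_pda_accepts_iff)
qed

lemma marked_palindromes_DCFL: "marked_palindromes \<in> DCFL {0, 1, 2}"
proof -
  have "x \<in> marked_palindromes" if accepts: "pda_accepts marked_palindrome_pda x" for x
  proof -
    obtain \<gamma> where "(pda_step marked_palindrome_pda)\<^sup>*\<^sup>* (0, x, [5]) (2, [], \<gamma>)"
      using accepts unfolding marked_palindrome_pda_accepts_iff ..
    then have "marked_palindrome_inv x (2, [], \<gamma>)"
      by (rule marked_palindrome_inv_run)
    then show ?thesis
      unfolding marked_palindrome_inv_def marked_palindromes_def by auto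
  qed
  moreover have "pda_accepts marked_palindrome_pda x" if "x \<in> marked_palindromes" for x
    using that marked_palindrome_pda_accepts_marked_palindromes unfolding marked_palindromes_def by blast
  ultimately have "marked_palindromes = {x \<in> lists {0, 1, 2}. pda_accepts marked_palindrome_pda x}"
    using marked_palindromes_lists by auto
  then show ?thesis
    unfolding DCFL_def using marked_palindromes_lists dpda_marked_palindrome_pda
    by (intro CollectI conjI exI[of _ marked_palindrome_pda])
qed

section \<open>Marked palindromes are not regular with advice\<close>

lemma foldl_dfa_in_states:
  "dfa A M \<Longrightarrow> q \<in> d_states M \<Longrightarrow> set xs \<subseteq> A \<Longrightarrow> foldl (d_delta M) q xs \<in> d_states M"
  by (induction xs arbitrary: q) (auto simp: dfa_def)

lemma dfa_merges_binary_words: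
  fixes M :: "(nat \<times> 'g) dfa"
  assumes M: "dfa ({0, 1, 2} \<times> \<Gamma>) M" and y: "set y \<subseteq> \<Gamma>"
  defines "m \<equiv> card (d_states M)"
  obtains u u' where "u \<in> lists {0, 1}" "u' \<in> lists {0, 1}" "length u = m" "length u' = m" "u \<noteq> u'"
    "foldl (d_delta M) (d_init M) (zip u y) = foldl (d_delta M) (d_init M) (zip u' y)"
proof -
  define U where "U = {u. set u \<subseteq> {0 :: nat, 1} \<and> length u = m}"
  define f where "f u = foldl (d_delta M) (d_init M) (zip u y)" for u
  have init: "d_init M \<in> d_states M"
    using M by (simp add: dfa_def)
  have "f ` U \<subseteq> d_states M"
  proof (rule image_subsetI)
    fix u assume "u \<in> U"
    have "set (zip u y) \<subseteq> set u \<times> set y"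
      by (auto dest: set_zip_leftD set_zip_rightD)
    also have "\<dots> \<subseteq> {0, 1, 2} \<times> \<Gamma>"
      using \<open>u \<in> U\<close> y unfolding U_def by blast
    finally show "f u \<in> d_states M"
      unfolding f_def by (rule foldl_dfa_in_states[OF M init])
  qed
  moreover have "card (d_states M) < card U"
    using card_lists_length_eq[of "{0 :: nat, 1}" m] less_exp[of m] by (simp add: U_def m_def numeral_2_eq_2)
  moreover have "finite (d_states M)"
    using M by (simp add: dfa_def)
  ultimately have "\<not> inj_on f U"
    using card_inj_on_le leD by blast
  then obtain u u' where "u \<in> U" "u' \<in> U" "u \<noteq> u'" "f u = f u'"
    unfolding inj_on_def by blast
  then show ?thesis
    using that unfolding U_def f_def lists_eq_set by blast
qed

lemma marked_palindromes_not_REG_n: "marked_palindromes \<notin> REG_n {0, 1, 2}"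
proof
  assume "marked_palindromes \<in> REG_n {0, 1, 2}"
  then obtain M \<Gamma> h where M: "dfa ({0, 1, 2} \<times> \<Gamma>) M" and h: "advice_fun \<Gamma> h"
    and accepts: "\<forall>x \<in> lists {0, 1, 2}. x \<in> marked_palindromes \<longleftrightarrow> dfa_accepts M (zip x (h (length x)))"
    unfolding REG_n_def by auto
  define m where "m = card (d_states M)"
  define y where "y = h (2 * m + 1)"
  have "set (take m y) \<subseteq> \<Gamma>"
    using h set_take_subset[of m y] by (auto simp: y_def advice_fun_def)
  then obtain u u' where u: "u \<in> lists {0, 1}" "u' \<in> lists {0, 1}" "length u = m" "length u' = m" "u \<noteq> u'"
    and same_state: "foldl (d_delta M) (d_init M) (zip u (take m y))
      = foldl (d_delta M) (d_init M) (zip u' (take m y))"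
    by (rule dfa_merges_binary_words[OF M _, folded m_def])
  define x where "x = u @ 2 # rev u"
  define x' where "x' = u' @ 2 # rev u"
  have "rev x' \<noteq> x'"
  proof
    assume "rev x' = x'"
    then have "u @ 2 # rev u' = u' @ 2 # rev u"
      by (simp add: x'_def)
    then show False
      using u(3-5) by (simp add: append_eq_append_conv)
  qed
  then have "x' \<notin> marked_palindromes"
    by (simp add: marked_palindromes_iff)
  moreover have "x \<in> marked_palindromes"
    using u(1) unfolding x_def marked_palindromes_def by blast
  moreover have "x \<in> lists {0, 1, 2}" "x' \<in> lists {0, 1, 2}" "length x = 2 * m + 1" "length x' = 2 * m + 1"
    using u by (auto simp: x_def x'_def)
  moreover have "dfa_accepts M (zip x y) \<longleftrightarrow> dfa_accepts M (zip x' y)"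
    using same_state u(3,4) by (simp add: dfa_accepts_def x_def x'_def zip_append1)
  ultimately show False
    using accepts by (simp add: y_def)
qed

theorem proposition4p3:
  shows "(\<exists>(\<Sigma> :: nat set) L. finite \<Sigma> \<and> L \<in> DCFL \<Sigma> \<and> L \<in> RFA_Rn \<Sigma> \<and> L \<notin> REG_n \<Sigma>) \<and>
         (\<exists>(\<Sigma> :: nat set) L. finite \<Sigma> \<and> L \<in> RFA_Rn \<Sigma> \<and> L \<notin> CFL_n \<Sigma>)"
proof
  have "marked_palindromes \<in> RFA_Rn {0, 1, 2}"
    unfolding marked_palindromes_parity_language by (rule parity_language_RFA_Rn) simp
  then show "\<exists>(\<Sigma> :: nat set) L. finite \<Sigma> \<and> L \<in> DCFL \<Sigma> \<and> L \<in> RFA_Rn \<Sigma> \<and> L \<notin> REG_n \<Sigma>"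
    using marked_palindromes_DCFL marked_palindromes_not_REG_n
    by (intro exI[of _ "{0, 1, 2}"] exI[of _ marked_palindromes]) simp
next
  obtain \<rho> where "parity_language {0, 1} (\<lambda>n. n) (\<lambda>n p s i. if class_of n (\<rho> n) p = i then s else 0)
      \<notin> CFL_n {0, 1}"
    using balanced_parity_language_not_CFL_n by auto
  moreover have "parity_language {0, 1} (\<lambda>n. n) (\<lambda>n p s i. if class_of n (\<rho> n) p = i then s else 0)
      \<in> RFA_Rn {0, 1}"
    by (rule parity_language_RFA_Rn) simp
  ultimately show "\<exists>(\<Sigma> :: nat set) L. finite \<Sigma> \<and> L \<in> RFA_Rn \<Sigma> \<and> L \<notin> CFL_n \<Sigma>"
    by (intro exI[of _ "{0, 1}"]) auto
qed

end
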